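(* Let $H$ be a transitive subgroup of $\operatorname{Sym}_n$ and let $S=S_n(H)$. Then $\bigcup_{i=1}^n Sa_i^2S$ is not a prime ideal of $S$.
   Context: $S_n(H)$ is the monoid with presentation $\langle a_1,\dots,a_n \mid a_1\cdots a_n = a_{\sigma(1)}\cdots a_{\sigma(n)},\ \sigma\in H\rangle$. An ideal $Q$ of a monoid $S$ is prime if $Q\neq S$ and, for $u,v\in S$, $uSv\subseteq Q$ implies $u\in Q$ or $v\in Q$. *)

theory Defs
  imports "HOL-Algebra.Sym_Groups"
begin

text \<open>Words over the generators a_1,...,a_n, represented as lists over {1..n}.\<close>
definition words :: "nat \<Rightarrow> nat list set" where
  "words n = {w. set w \<subseteq> {1..n}}"

inductive_set Sn_rel :: "nat \<Rightarrow> (nat \<Rightarrow> nat) set \<Rightarrow> (nat list \<times> nat list) set"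
  for n :: nat and H :: "(nat \<Rightarrow> nat) set" where
  refl: "w \<in> words n \<Longrightarrow> (w, w) \<in> Sn_rel n H"
| rel: "\<lbrakk>\<sigma> \<in> H; u \<in> words n; v \<in> words n\<rbrakk> \<Longrightarrow>
          (u @ [1..<Suc n] @ v, u @ map \<sigma> [1..<Suc n] @ v) \<in> Sn_rel n H"
| sym: "(x, y) \<in> Sn_rel n H \<Longrightarrow> (y, x) \<in> Sn_rel n H"
| trans: "\<lbrakk>(x, y) \<in> Sn_rel n H; (y, z) \<in> Sn_rel n H\<rbrakk> \<Longrightarrow> (x, z) \<in> Sn_rel n H"

definition Sn :: "nat \<Rightarrow> (nat \<Rightarrow> nat) set \<Rightarrow> nat list set set" where
  "Sn n H = words n // Sn_rel n H"

definition Sn_cls :: "nat \<Rightarrow> (nat \<Rightarrow> nat) set \<Rightarrow> nat list \<Rightarrow> nat list set" where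
  "Sn_cls n H w = Sn_rel n H `` {w}"

definition Sn_mult :: "nat \<Rightarrow> (nat \<Rightarrow> nat) set \<Rightarrow> nat list set \<Rightarrow> nat list set \<Rightarrow> nat list set" where
  "Sn_mult n H X Y = (\<Union>x\<in>X. \<Union>y\<in>Y. Sn_cls n H (x @ y))"

definition Sn_gen :: "nat \<Rightarrow> (nat \<Rightarrow> nat) set \<Rightarrow> nat \<Rightarrow> nat list set" where
  "Sn_gen n H i = Sn_cls n H [i]"

definition monoid_ideal :: "'a set \<Rightarrow> ('a \<Rightarrow> 'a \<Rightarrow> 'a) \<Rightarrow> 'a set \<Rightarrow> bool" where
  "monoid_ideal S m Q \<longleftrightarrow> Q \<subseteq> S \<and> (\<forall>s\<in>S. \<forall>q\<in>Q. m s q \<in> Q \<and> m q s \<in> Q)"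

definition prime_monoid_ideal :: "'a set \<Rightarrow> ('a \<Rightarrow> 'a \<Rightarrow> 'a) \<Rightarrow> 'a set \<Rightarrow> bool" where
  "prime_monoid_ideal S m Q \<longleftrightarrow> monoid_ideal S m Q \<and> Q \<noteq> S \<and>
     (\<forall>u\<in>S. \<forall>v\<in>S. (\<forall>s\<in>S. m (m u s) v \<in> Q) \<longrightarrow> u \<in> Q \<or> v \<in> Q)"

end

theory Submission
  imports Defs
begin

text \<open>Put \<open>d = a\<^sub>1\<cdots>a\<^sub>n\<close>. Every word equal to \<open>d\<close> in \<open>S\<^sub>n(H)\<close> is a rearrangement of
  \<open>1, \<dots>, n\<close>, so it has no repeated letter and \<open>d\<close> lies outside the ideal \<open>Q\<close> generated by the
  squares \<open>a\<^sub>i\<^sup>2\<close>. On the other hand \<open>d x d \<in> Q\<close> for every \<open>x\<close>: by transitivity of \<open>H\<close> we may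
  rewrite the left factor \<open>d\<close> as \<open>a\<^bsub>\<sigma>(1)\<^esub>\<cdots>a\<^bsub>\<sigma>(n)\<^esub>\<close> with \<open>\<sigma>(n)\<close> the first letter of \<open>x\<close>
  (or, for \<open>x = 1\<close>, the right factor \<open>d\<close> with \<open>\<sigma>(1) = n\<close>), which creates a square.
  Thus \<open>d S d \<subseteq> Q\<close> while \<open>d \<notin> Q\<close>.\<close>

definition id_word :: "nat \<Rightarrow> nat list" where
  "id_word n = [1..<Suc n]"

lemma set_id_word [simp]: "set (id_word n) = {1..n}"
  by (auto simp: id_word_def)

lemma distinct_id_word [simp]: "distinct (id_word n)"
  by (simp add: id_word_def del: upt_Suc)

lemma id_word_snoc: "n \<ge> 1 \<Longrightarrow> id_word n = [1..<n] @ [n]"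
  by (simp add: id_word_def)

lemma id_word_Cons: "n \<ge> 1 \<Longrightarrow> id_word n = 1 # [2..<Suc n]"
  by (simp add: id_word_def upt_conv_Cons numeral_2_eq_2 del: upt_Suc)

lemma id_word_in_words: "id_word n \<in> words n"
  by (simp add: words_def)

lemma words_append_iff [simp]: "xs @ ys \<in> words n \<longleftrightarrow> xs \<in> words n \<and> ys \<in> words n"
  by (auto simp: words_def)

lemma words_Cons_iff [simp]: "x # xs \<in> words n \<longleftrightarrow> x \<in> {1..n} \<and> xs \<in> words n"
  by (auto simp: words_def)

lemma words_Nil [simp]: "[] \<in> words n"
  by (simp add: words_def)

lemma map_permutes_in_words:
  assumes "\<sigma> permutes {1..n}" "set xs \<subseteq> {1..n}"
  shows "map \<sigma> xs \<in> words n"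
  using assms permutes_in_image[OF assms(1)] by (auto simp: words_def)

lemma subgroup_sym_group_permutes:
  assumes "subgroup H (sym_group n)" "\<sigma> \<in> H"
  shows "\<sigma> permutes {1..n}"
  using subgroup.subset[OF assms(1)] assms(2) by (auto simp: sym_group_def)

lemma Sn_rel_relator:
  assumes "\<sigma> \<in> H" "u \<in> words n" "v \<in> words n"
  shows "(u @ id_word n @ v, u @ map \<sigma> (id_word n) @ v) \<in> Sn_rel n H"
  unfolding id_word_def using Sn_rel.rel[OF assms] .

context
  fixes n :: nat and H :: "(nat \<Rightarrow> nat) set"
  assumes H: "subgroup H (sym_group n)"
begin

lemma Sn_rel_words: "(x, y) \<in> Sn_rel n H \<Longrightarrow> x \<in> words n \<and> y \<in> words n"
proof (induction rule: Sn_rel.induct)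
  case (rel \<sigma> u v)
  have "map \<sigma> (id_word n) \<in> words n"
    using map_permutes_in_words[OF subgroup_sym_group_permutes[OF H rel(1)]] by simp
  then show ?case
    using rel id_word_in_words by (simp add: id_word_def del: upt_Suc)
qed auto

lemma Sn_rel_append:
  assumes "(x, x') \<in> Sn_rel n H" "y \<in> words n"
  shows "(x @ y, x' @ y) \<in> Sn_rel n H \<and> (y @ x, y @ x') \<in> Sn_rel n H"
  using assms
proof (induction rule: Sn_rel.induct)
  case (refl w)
  then show ?case by (auto intro: Sn_rel.refl)
next
  case (rel \<sigma> u v)
  then show ?case
    using Sn_rel.rel[of \<sigma> H u n "v @ y"] Sn_rel.rel[of \<sigma> H "y @ u" n v] by simp
next
  case (sym x y)
  then show ?case by (auto intro: Sn_rel.sym)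
next
  case (trans x y z)
  then show ?case by (meson Sn_rel.trans)
qed

lemma Sn_rel_mset: "(x, y) \<in> Sn_rel n H \<Longrightarrow> mset x = mset y"
proof (induction rule: Sn_rel.induct)
  case (rel \<sigma> u v)
  have perm: "\<sigma> permutes {1..n}"
    using subgroup_sym_group_permutes[OF H rel(1)] .
  have "distinct (map \<sigma> (id_word n))"
    using permutes_inj_on[OF perm] by (simp add: distinct_map)
  moreover have "set (map \<sigma> (id_word n)) = set (id_word n)"
    using permutes_image[OF perm] by simp
  ultimately have "mset (map \<sigma> (id_word n)) = mset (id_word n)"
    using set_eq_iff_mset_eq_distinct distinct_id_word by blast
  then show ?case by (simp add: id_word_def del: upt_Suc mset_map)
qed auto

lemma Sn_mult_cls:
  assumes "x \<in> words n" "y \<in> words n"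
  shows "Sn_mult n H (Sn_cls n H x) (Sn_cls n H y) = Sn_cls n H (x @ y)"
proof
  show "Sn_mult n H (Sn_cls n H x) (Sn_cls n H y) \<subseteq> Sn_cls n H (x @ y)"
  proof
    fix z assume "z \<in> Sn_mult n H (Sn_cls n H x) (Sn_cls n H y)"
    then obtain x' y' where x': "(x, x') \<in> Sn_rel n H" and y': "(y, y') \<in> Sn_rel n H"
      and z: "(x' @ y', z) \<in> Sn_rel n H"
      unfolding Sn_mult_def Sn_cls_def by auto
    have "(x @ y, x' @ y) \<in> Sn_rel n H"
      using Sn_rel_append[OF x' assms(2)] by simp
    moreover have "(x' @ y, x' @ y') \<in> Sn_rel n H"
      using Sn_rel_append[OF y'] Sn_rel_words[OF x'] by simp
    ultimately show "z \<in> Sn_cls n H (x @ y)"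
      using z unfolding Sn_cls_def by (blast intro: Sn_rel.trans)
  qed
next
  have "x \<in> Sn_cls n H x" "y \<in> Sn_cls n H y"
    using assms by (auto simp: Sn_cls_def intro: Sn_rel.refl)
  then show "Sn_cls n H (x @ y) \<subseteq> Sn_mult n H (Sn_cls n H x) (Sn_cls n H y)"
    unfolding Sn_mult_def by blast
qed

end

lemma Sn_cls_eq: "(x, y) \<in> Sn_rel n H \<Longrightarrow> Sn_cls n H x = Sn_cls n H y"
  unfolding Sn_cls_def by (auto intro: Sn_rel.trans Sn_rel.sym)

lemma Sn_cls_self: "x \<in> words n \<Longrightarrow> x \<in> Sn_cls n H x"
  by (simp add: Sn_cls_def Sn_rel.refl)

lemma Sn_cls_in_Sn: "x \<in> words n \<Longrightarrow> Sn_cls n H x \<in> Sn n H"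
  unfolding Sn_def Sn_cls_def quotient_def by auto

lemma SnE:
  assumes "X \<in> Sn n H"
  obtains x where "x \<in> words n" "X = Sn_cls n H x"
  using assms unfolding Sn_def Sn_cls_def quotient_def by auto

definition Sn_square_ideal :: "nat \<Rightarrow> (nat \<Rightarrow> nat) set \<Rightarrow> nat list set set" where
  "Sn_square_ideal n H = (\<Union>i\<in>{1..n}. {Sn_mult n H (Sn_mult n H s
      (Sn_mult n H (Sn_gen n H i) (Sn_gen n H i))) t | s t. s \<in> Sn n H \<and> t \<in> Sn n H})"

lemma Sn_square_ideal_iff:
  assumes "subgroup H (sym_group n)"
  shows "X \<in> Sn_square_ideal n H \<longleftrightarrow>
    (\<exists>s t i. s \<in> words n \<and> t \<in> words n \<and> i \<in> {1..n} \<and> X = Sn_cls n H (s @ [i, i] @ t))"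
    (is "_ \<longleftrightarrow> ?square_factor_word")
proof -
  have square_factor: "Sn_mult n H (Sn_mult n H (Sn_cls n H s)
      (Sn_mult n H (Sn_gen n H i) (Sn_gen n H i))) (Sn_cls n H t) = Sn_cls n H (s @ [i, i] @ t)"
    if "s \<in> words n" "t \<in> words n" "i \<in> {1..n}" for s t i
  proof -
    have "Sn_mult n H (Sn_gen n H i) (Sn_gen n H i) = Sn_cls n H [i, i]"
      unfolding Sn_gen_def using Sn_mult_cls[OF assms, of "[i]" "[i]"] that(3) by simp
    then show ?thesis
      using that by (simp add: Sn_mult_cls[OF assms])
  qed
  show ?thesis
  proof
    assume "X \<in> Sn_square_ideal n H"
    then obtain i S T where i: "i \<in> {1..n}" and "S \<in> Sn n H" "T \<in> Sn n H"
      and X: "X = Sn_mult n H (Sn_mult n H S (Sn_mult n H (Sn_gen n H i) (Sn_gen n H i))) T"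
      unfolding Sn_square_ideal_def by blast
    obtain s where s: "s \<in> words n" "S = Sn_cls n H s"
      using \<open>S \<in> Sn n H\<close> by (rule SnE)
    obtain t where t: "t \<in> words n" "T = Sn_cls n H t"
      using \<open>T \<in> Sn n H\<close> by (rule SnE)
    have "X = Sn_cls n H (s @ [i, i] @ t)"
      using X s t i by (simp only: square_factor)
    with s t i show ?square_factor_word by blast
  next
    assume ?square_factor_word
    then obtain s t i where s: "s \<in> words n" and t: "t \<in> words n" and i: "i \<in> {1..n}"
      and "X = Sn_cls n H (s @ [i, i] @ t)" by blast
    then have "X = Sn_mult n H (Sn_mult n H (Sn_cls n H s)
        (Sn_mult n H (Sn_gen n H i) (Sn_gen n H i))) (Sn_cls n H t)"
      by (simp only: square_factor)
    then show "X \<in> Sn_square_ideal n H"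
      unfolding Sn_square_ideal_def using Sn_cls_in_Sn[OF s] Sn_cls_in_Sn[OF t] i by blast
  qed
qed

lemma id_word_cls_not_in_square_ideal:
  assumes "subgroup H (sym_group n)"
  shows "Sn_cls n H (id_word n) \<notin> Sn_square_ideal n H"
proof
  assume "Sn_cls n H (id_word n) \<in> Sn_square_ideal n H"
  then obtain s t i where "s @ [i, i] @ t \<in> words n"
    and eq: "Sn_cls n H (id_word n) = Sn_cls n H (s @ [i, i] @ t)"
    by (auto simp: Sn_square_ideal_iff[OF assms])
  then have "s @ [i, i] @ t \<in> Sn_cls n H (id_word n)"
    using Sn_cls_self by metis
  then have "(id_word n, s @ [i, i] @ t) \<in> Sn_rel n H"
    by (simp add: Sn_cls_def)
  from mset_eq_imp_distinct_iff[OF Sn_rel_mset[OF assms this]]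
  show False by simp
qed

lemma Sn_rel_id_word_square_right:
  assumes "n \<ge> 1" "\<sigma> \<in> H" "\<sigma> 1 = n"
  shows "(id_word n @ id_word n, [1..<n] @ [n, n] @ map \<sigma> [2..<Suc n]) \<in> Sn_rel n H"
proof -
  have "map \<sigma> (id_word n) = n # map \<sigma> [2..<Suc n]"
    using assms by (simp add: id_word_Cons del: upt_Suc)
  then have "id_word n @ map \<sigma> (id_word n) = [1..<n] @ [n, n] @ map \<sigma> [2..<Suc n]"
    using assms(1) by (simp add: id_word_snoc del: upt_Suc)
  then show ?thesis
    using Sn_rel_relator[OF assms(2) id_word_in_words[of n] words_Nil] by (simp del: upt_Suc)
qed

lemma Sn_rel_id_word_square_left:
  assumes "n \<ge> 1" "\<sigma> \<in> H" "\<sigma> n = j" "j # w \<in> words n"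
  shows "(id_word n @ j # w, map \<sigma> [1..<n] @ [j, j] @ w) \<in> Sn_rel n H"
proof -
  have "map \<sigma> (id_word n) = map \<sigma> [1..<n] @ [j]"
    using assms by (simp add: id_word_snoc del: upt_Suc)
  then show ?thesis
    using Sn_rel_relator[OF assms(2) words_Nil assms(4)] by simp
qed

lemma id_word_sandwich_in_square_ideal:
  assumes "n \<ge> 1" and H: "subgroup H (sym_group n)"
    and transitive: "\<forall>i\<in>{1..n}. \<forall>j\<in>{1..n}. \<exists>\<sigma>\<in>H. \<sigma> i = j"
    and "w \<in> words n"
  shows "Sn_cls n H (id_word n @ w @ id_word n) \<in> Sn_square_ideal n H"
proof (cases w)
  case Nil
  obtain \<sigma> where \<sigma>: "\<sigma> \<in> H" "\<sigma> 1 = n" using assms(1) transitive by force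
  have "set [2..<Suc n] \<subseteq> {1..n}" by auto
  then have "map \<sigma> [2..<Suc n] \<in> words n"
    by (rule map_permutes_in_words[OF subgroup_sym_group_permutes[OF H \<sigma>(1)]])
  moreover have "[1..<n] \<in> words n" "n \<in> {1..n}"
    using assms(1) by (auto simp: words_def)
  moreover have "Sn_cls n H (id_word n @ w @ id_word n)
      = Sn_cls n H ([1..<n] @ [n, n] @ map \<sigma> [2..<Suc n])"
    using Sn_cls_eq[OF Sn_rel_id_word_square_right[OF assms(1) \<sigma>]] Nil by simp
  ultimately show ?thesis
    unfolding Sn_square_ideal_iff[OF H] by blast
next
  case (Cons j w')
  with assms(4) have j: "j \<in> {1..n}" and "w' @ id_word n \<in> words n"
    by (auto simp: id_word_in_words)
  obtain \<sigma> where \<sigma>: "\<sigma> \<in> H" "\<sigma> n = j" using assms(1) transitive j by force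
  have "set [1..<n] \<subseteq> {1..n}" by auto
  then have "map \<sigma> [1..<n] \<in> words n"
    by (rule map_permutes_in_words[OF subgroup_sym_group_permutes[OF H \<sigma>(1)]])
  moreover have "Sn_cls n H (id_word n @ w @ id_word n)
      = Sn_cls n H (map \<sigma> [1..<n] @ [j, j] @ (w' @ id_word n))"
    using Sn_rel_id_word_square_left[OF assms(1) \<sigma>, of "w' @ id_word n"] j
      \<open>w' @ id_word n \<in> words n\<close> Cons by (simp add: Sn_cls_eq)
  ultimately show ?thesis
    unfolding Sn_square_ideal_iff[OF H] using j \<open>w' @ id_word n \<in> words n\<close> by blast
qed

lemma not_prime_monoid_idealI:
  assumes "u \<in> S" "u \<notin> Q" "\<And>s. s \<in> S \<Longrightarrow> m (m u s) u \<in> Q"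
  shows "\<not> prime_monoid_ideal S m Q"
  using assms unfolding prime_monoid_ideal_def by blast

theorem lemma4p4:
  fixes n :: nat and H :: "(nat \<Rightarrow> nat) set"
  assumes "n \<ge> 1"
    and "subgroup H (sym_group n)"
    and "\<forall>i\<in>{1..n}. \<forall>j\<in>{1..n}. \<exists>\<sigma>\<in>H. \<sigma> i = j"
  shows "\<not> prime_monoid_ideal (Sn n H) (Sn_mult n H)
           (\<Union>i\<in>{1..n}. {Sn_mult n H (Sn_mult n H s (Sn_mult n H (Sn_gen n H i) (Sn_gen n H i))) t
                          | s t. s \<in> Sn n H \<and> t \<in> Sn n H})"
proof -
  let ?d = "Sn_cls n H (id_word n)"
  have "Sn_mult n H (Sn_mult n H ?d x) ?d \<in> Sn_square_ideal n H" if "x \<in> Sn n H" for x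
  proof -
    obtain w where w: "w \<in> words n" "x = Sn_cls n H w" using \<open>x \<in> Sn n H\<close> by (rule SnE)
    then have "Sn_mult n H (Sn_mult n H ?d x) ?d = Sn_cls n H (id_word n @ w @ id_word n)"
      using id_word_in_words by (simp add: Sn_mult_cls[OF assms(2)])
    with id_word_sandwich_in_square_ideal[OF assms w(1)] show ?thesis by simp
  qed
  then have "\<not> prime_monoid_ideal (Sn n H) (Sn_mult n H) (Sn_square_ideal n H)"
    using not_prime_monoid_idealI Sn_cls_in_Sn[OF id_word_in_words]
      id_word_cls_not_in_square_ideal[OF assms(2)] by metis
  then show ?thesis by (simp add: Sn_square_ideal_def)
qed

end
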